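(* $M_2(3)=4$, $M_3(3)=8$, and for every integer $k\ge 4$, $$\tfrac{3}{4}\,2^k+2\le M_k(3)\le 2^k-1.$$
   Context: All graphs are finite and simple. A path $v_1,\ldots,v_r$ in a graph $G$ is degree-monotone if $\deg_G(v_1)\le\cdots\le\deg_G(v_r)$; its order is $r$. Let $mp(G)$ be the maximum order of a degree-monotone path in $G$. For a $k$-edge-coloring of $K_n$ with colors $1,\ldots,k$, let $G_j$ be the spanning subgraph consisting of the edges colored $j$ (degrees taken in $G_j$). $M_k(m)$ is the minimum integer $M$ such that for every $n\ge M$ and every $k$-edge-coloring of $K_n$ there is some $j$ with $mp(G_j)\ge m$. *)

theory Defs
  imports Complex_Main
begin

text \<open>The complete graph K_n has vertex set {0..<n}. A k-edge-colouring is a symmetric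
function c assigning to every pair of distinct vertices a colour in {1..k}.\<close>

definition edge_coloring :: "nat \<Rightarrow> nat \<Rightarrow> (nat \<Rightarrow> nat \<Rightarrow> nat) \<Rightarrow> bool" where
  "edge_coloring k n c \<longleftrightarrow>
     (\<forall>u v. u < n \<and> v < n \<and> u \<noteq> v \<longrightarrow> c u v = c v u \<and> c u v \<in> {1..k})"

definition col_edge :: "nat \<Rightarrow> (nat \<Rightarrow> nat \<Rightarrow> nat) \<Rightarrow> nat \<Rightarrow> nat \<Rightarrow> nat \<Rightarrow> bool" where
  "col_edge n c j u v \<longleftrightarrow> u < n \<and> v < n \<and> u \<noteq> v \<and> c u v = j"

definition col_deg :: "nat \<Rightarrow> (nat \<Rightarrow> nat \<Rightarrow> nat) \<Rightarrow> nat \<Rightarrow> nat \<Rightarrow> nat" where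
  "col_deg n c j v = card {u. col_edge n c j v u}"

text \<open>A degree-monotone path in G_j, given as the list of its vertices (order = length).\<close>
definition dm_path :: "nat \<Rightarrow> (nat \<Rightarrow> nat \<Rightarrow> nat) \<Rightarrow> nat \<Rightarrow> nat list \<Rightarrow> bool" where
  "dm_path n c j vs \<longleftrightarrow> vs \<noteq> [] \<and> distinct vs \<and> set vs \<subseteq> {..<n} \<and>
     (\<forall>i. Suc i < length vs \<longrightarrow> col_edge n c j (vs ! i) (vs ! Suc i)
            \<and> col_deg n c j (vs ! i) \<le> col_deg n c j (vs ! Suc i))"

definition mp :: "nat \<Rightarrow> (nat \<Rightarrow> nat \<Rightarrow> nat) \<Rightarrow> nat \<Rightarrow> nat" where
  "mp n c j = Max (length ` {vs. dm_path n c j vs})"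

definition mk_good :: "nat \<Rightarrow> nat \<Rightarrow> nat \<Rightarrow> bool" where
  "mk_good k m M \<longleftrightarrow> (\<forall>n \<ge> M. \<forall>c. edge_coloring k n c \<longrightarrow> (\<exists>j \<in> {1..k}. mp n c j \<ge> m))"

definition M_k :: "nat \<Rightarrow> nat \<Rightarrow> nat" where
  "M_k k m = (LEAST M. mk_good k m M)"

end

theory Submission
  imports Defs "HOL-Analysis.Convex"
begin

text \<open>
  Call a colouring P3-free if no colour class contains a degree-monotone path on three
  vertices; for n > 0 this says exactly that every class has mp < 3.

  Lower bound: given P3-free k-colourings of K_a and K_b with a \<noteq> b, colour all edges between
  them with a new colour. The new class is K_{a,b}, whose two sides have different degrees, so
  the result is a P3-free (k+1)-colouring of K_{a+b}. Starting from K_2 with one colour and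
  explicit 3-colourings of K_6 and K_7, this yields P3-free k-colourings of K_n for all
  n \<le> 3 * 2^(k-2) + 1.

  Upper bound: in a P3-free graph adjacent vertices of equal degree have degree one, and a vertex
  with a neighbour of larger degree has only neighbours of larger degree. So every edge joins a
  high vertex to a low one, and a vertex is determined by the set of colours in which it is
  high; hence n \<le> 2^k. Double counting 1/d(l) - 1/d(h) over the edges hl of a class shows that
  there are at least as many low as high vertices, with equality only if all high vertices have
  degree one. If n = 2^k every colour set occurs, which forces every class to be a perfect
  matching, and counting edges gives 2^k - 1 = k. If n = 2^k - 1 exactly one colour set is
  missing; then the high vertices of degree at least two are few (by AM-HM), the vertices in
  components of order at most two are controlled through the missing set, and the resulting
  counts contradict each other for k \<ge> 4 (with Cauchy-Schwarz).
\<close>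

section \<open>Monotone paths of order three\<close>

definition mono_path3 :: "nat \<Rightarrow> (nat \<Rightarrow> nat \<Rightarrow> nat) \<Rightarrow> nat \<Rightarrow> nat \<Rightarrow> nat \<Rightarrow> nat \<Rightarrow> bool" where
  "mono_path3 n c j u v w \<longleftrightarrow> col_edge n c j u v \<and> col_edge n c j v w \<and> u \<noteq> w \<and>
     col_deg n c j u \<le> col_deg n c j v \<and> col_deg n c j v \<le> col_deg n c j w"

definition mono_path3_free :: "nat \<Rightarrow> (nat \<Rightarrow> nat \<Rightarrow> nat) \<Rightarrow> nat \<Rightarrow> bool" where
  "mono_path3_free n c j \<longleftrightarrow> (\<forall>u v w. \<not> mono_path3 n c j u v w)"

lemma finite_dm_paths: "finite {vs. dm_path n c j vs}"
proof -
  have "{vs. dm_path n c j vs} \<subseteq> {xs. set xs \<subseteq> {..<n} \<and> length xs \<le> n}"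
  proof
    fix vs assume "vs \<in> {vs. dm_path n c j vs}"
    then have d: "distinct vs" "set vs \<subseteq> {..<n}" by (auto simp: dm_path_def)
    then have "length vs \<le> n"
      using distinct_card[OF d(1)] card_mono[OF _ d(2)] by fastforce
    with d show "vs \<in> {xs. set xs \<subseteq> {..<n} \<and> length xs \<le> n}" by auto
  qed
  then show ?thesis using finite_lists_length_le[of "{..<n}" n] finite_subset by blast
qed

lemma mp_ge_3_iff:
  assumes "0 < n"
  shows "3 \<le> mp n c j \<longleftrightarrow> \<not> mono_path3_free n c j"
proof
  assume "3 \<le> mp n c j"
  have "dm_path n c j [0]" using assms by (simp add: dm_path_def)
  then have "mp n c j \<in> length ` {vs. dm_path n c j vs}"
    unfolding mp_def by (intro Max_in finite_imageI finite_dm_paths) auto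
  then obtain vs where p: "dm_path n c j vs" and l: "3 \<le> length vs"
    using \<open>3 \<le> mp n c j\<close> by auto
  have step: "Suc i < length vs \<Longrightarrow>
      col_edge n c j (vs!i) (vs!Suc i) \<and> col_deg n c j (vs!i) \<le> col_deg n c j (vs!Suc i)" for i
    using p by (simp add: dm_path_def)
  have "vs!0 \<noteq> vs!2" using p l by (simp add: dm_path_def nth_eq_iff_index_eq)
  then have "mono_path3 n c j (vs!0) (vs!1) (vs!2)"
    using step[of 0] step[of 1] l by (simp add: mono_path3_def numeral_2_eq_2)
  then show "\<not> mono_path3_free n c j" by (auto simp: mono_path3_free_def)
next
  assume "\<not> mono_path3_free n c j"
  then obtain u v w where "mono_path3 n c j u v w" by (auto simp: mono_path3_free_def)
  then have "dm_path n c j [u, v, w]"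
    unfolding mono_path3_def dm_path_def col_edge_def
    by (auto simp: less_Suc_eq nth_Cons split: nat.splits)
  then have "3 \<in> length ` {vs. dm_path n c j vs}"
    by (intro image_eqI[where x="[u, v, w]"]) (simp_all add: numeral_3_eq_3)
  then show "3 \<le> mp n c j"
    unfolding mp_def by (rule Max_ge[OF finite_imageI[OF finite_dm_paths]])
qed

lemma mono_path3_free_if_not_color:
  "edge_coloring k n c \<Longrightarrow> j \<notin> {1..k} \<Longrightarrow> mono_path3_free n c j"
  unfolding mono_path3_free_def mono_path3_def col_edge_def edge_coloring_def by auto

locale p3_free_coloring =
  fixes k n :: nat and c :: "nat \<Rightarrow> nat \<Rightarrow> nat"
  assumes coloring: "edge_coloring k n c"
    and class_free: "j \<in> {1..k} \<Longrightarrow> mono_path3_free n c j"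

lemma p3_free_coloring_iff:
  "p3_free_coloring k n c \<longleftrightarrow> edge_coloring k n c \<and> (\<forall>j. mono_path3_free n c j)"
  using mono_path3_free_if_not_color unfolding p3_free_coloring_def by blast

lemma edge_coloring_mono: "edge_coloring k n c \<Longrightarrow> k \<le> k' \<Longrightarrow> edge_coloring k' n c"
  unfolding edge_coloring_def by force

lemma p3_free_coloring_mono: "p3_free_coloring k n c \<Longrightarrow> k \<le> k' \<Longrightarrow> p3_free_coloring k' n c"
  using edge_coloring_mono by (auto simp: p3_free_coloring_iff)

lemma p3_free_coloring_le_2: "n \<le> 2 \<Longrightarrow> p3_free_coloring 1 n (\<lambda>_ _. 1)"
  unfolding p3_free_coloring_iff edge_coloring_def mono_path3_free_def mono_path3_def col_edge_def
  by auto

section \<open>Doubling P3-free colourings\<close>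

definition join_coloring ::
  "nat \<Rightarrow> nat \<Rightarrow> (nat \<Rightarrow> nat \<Rightarrow> nat) \<Rightarrow> (nat \<Rightarrow> nat \<Rightarrow> nat) \<Rightarrow> nat \<Rightarrow> nat \<Rightarrow> nat" where
  "join_coloring k a c1 c2 u v =
     (if u < a \<and> v < a then c1 u v else if a \<le> u \<and> a \<le> v then c2 (u - a) (v - a) else Suc k)"

lemma edge_coloring_join:
  assumes "edge_coloring k a c1" "edge_coloring k b c2"
  shows "edge_coloring (Suc k) (a + b) (join_coloring k a c1 c2)"
  unfolding edge_coloring_def
proof (intro allI impI)
  fix u v assume h: "u < a + b \<and> v < a + b \<and> u \<noteq> v"
  have "c1 u v = c1 v u \<and> c1 u v \<in> {1..k}" if "u < a" "v < a"
    using assms(1) h that unfolding edge_coloring_def by blast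
  moreover have "c2 (u - a) (v - a) = c2 (v - a) (u - a) \<and> c2 (u - a) (v - a) \<in> {1..k}"
    if "a \<le> u" "a \<le> v"
  proof -
    have "u - a < b" "v - a < b" "u - a \<noteq> v - a" using h that by auto
    then show ?thesis using assms(2) unfolding edge_coloring_def by blast
  qed
  ultimately show "join_coloring k a c1 c2 u v = join_coloring k a c1 c2 v u \<and>
      join_coloring k a c1 c2 u v \<in> {1..Suc k}"
    unfolding join_coloring_def by auto
qed

lemma col_edge_join_left:
  assumes "edge_coloring k a c1" "u < a"
  shows "col_edge (a + b) (join_coloring k a c1 c2) j u x \<longleftrightarrow>
     (if j = Suc k then a \<le> x \<and> x < a + b else col_edge a c1 j u x)"
proof (cases "x < a")
  case True
  then have "u \<noteq> x \<Longrightarrow> c1 u x \<in> {1..k}" using assms unfolding edge_coloring_def by blast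
  then show ?thesis using True assms unfolding col_edge_def join_coloring_def by auto
next
  case False then show ?thesis using assms unfolding col_edge_def join_coloring_def by auto
qed

lemma col_edge_join_right:
  assumes "edge_coloring k b c2" "a \<le> u" "u < a + b"
  shows "col_edge (a + b) (join_coloring k a c1 c2) j u x \<longleftrightarrow>
     (if j = Suc k then x < a else a \<le> x \<and> col_edge b c2 j (u - a) (x - a))"
proof (cases "a \<le> x")
  case True
  have "x < a + b \<Longrightarrow> u \<noteq> x \<Longrightarrow> c2 (u - a) (x - a) \<in> {1..k}"
    using assms True unfolding edge_coloring_def by (metis add.commute less_diff_conv2 eq_diff_iff)
  moreover have "(x < a + b \<and> u \<noteq> x) = (x - a < b \<and> u - a \<noteq> x - a)"
    using True assms by auto
  ultimately show ?thesis using True assms unfolding col_edge_def join_coloring_def by auto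
next
  case False then show ?thesis using assms unfolding col_edge_def join_coloring_def by auto
qed

lemma col_deg_join_left:
  assumes "edge_coloring k a c1" "u < a"
  shows "col_deg (a + b) (join_coloring k a c1 c2) j u = (if j = Suc k then b else col_deg a c1 j u)"
proof -
  have "{x. col_edge (a + b) (join_coloring k a c1 c2) j u x} =
      (if j = Suc k then {a..<a + b} else {x. col_edge a c1 j u x})"
    using col_edge_join_left[OF assms] by auto
  then show ?thesis by (simp add: col_deg_def)
qed

lemma Collect_shift_eq_image: "{x::nat. a \<le> x \<and> P (x - a)} = (\<lambda>y. y + a) ` {y. P y}"
proof (intro set_eqI iffI)
  fix x assume "x \<in> {x. a \<le> x \<and> P (x - a)}"
  then show "x \<in> (\<lambda>y. y + a) ` {y. P y}" by (intro image_eqI[where x="x - a"]) auto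
qed auto

lemma col_deg_join_right:
  assumes "edge_coloring k b c2" "a \<le> u" "u < a + b"
  shows "col_deg (a + b) (join_coloring k a c1 c2) j u =
    (if j = Suc k then a else col_deg b c2 j (u - a))"
proof -
  have "{x. col_edge (a + b) (join_coloring k a c1 c2) j u x} =
      (if j = Suc k then {..<a} else {x. a \<le> x \<and> col_edge b c2 j (u - a) (x - a)})"
    using col_edge_join_right[OF assms] by auto
  then show ?thesis unfolding col_deg_def Collect_shift_eq_image by (simp add: card_image)
qed

lemma mono_path3_free_join_new:
  assumes c1: "edge_coloring k a c1" and c2: "edge_coloring k b c2" and "a \<noteq> b"
  shows "mono_path3_free (a + b) (join_coloring k a c1 c2) (Suc k)"
  unfolding mono_path3_free_def
proof (intro allI notI)
  let ?C = "join_coloring k a c1 c2"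
  have side: "x < a \<longleftrightarrow> \<not> y < a" if "col_edge (a + b) ?C (Suc k) x y" for x y
  proof (cases "x < a")
    case True
    then show ?thesis using that col_edge_join_left[OF c1 True, of b c2 "Suc k" y] by simp
  next
    case False
    moreover have "x < a + b" using that by (simp add: col_edge_def)
    ultimately show ?thesis
      using that col_edge_join_right[OF c2 _ \<open>x < a + b\<close>, of c1 "Suc k" y] by simp
  qed
  have deg: "x < a + b \<Longrightarrow> col_deg (a + b) ?C (Suc k) x = (if x < a then b else a)" for x
    using col_deg_join_left[OF c1] col_deg_join_right[OF c2] by (simp add: not_less)
  fix u v w assume p: "mono_path3 (a + b) ?C (Suc k) u v w"
  then have "(u < a) = (w < a)" "(u < a) \<noteq> (v < a)"
    using side unfolding mono_path3_def by blast+
  moreover have "u < a + b" "v < a + b" "w < a + b" using p by (auto simp: mono_path3_def col_edge_def)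
  ultimately show False
    using p deg \<open>a \<noteq> b\<close> unfolding mono_path3_def by (cases "u < a") auto
qed

lemma mono_path3_free_join_old:
  assumes c1: "edge_coloring k a c1" and c2: "edge_coloring k b c2"
    and f1: "mono_path3_free a c1 j" and f2: "mono_path3_free b c2 j" and "j \<noteq> Suc k"
  shows "mono_path3_free (a + b) (join_coloring k a c1 c2) j"
  unfolding mono_path3_free_def
proof (intro allI notI)
  let ?C = "join_coloring k a c1 c2"
  fix u v w assume "mono_path3 (a + b) ?C j u v w"
  then have e1: "col_edge (a + b) ?C j u v" and e2: "col_edge (a + b) ?C j v w" and "u \<noteq> w"
    and d1: "col_deg (a + b) ?C j u \<le> col_deg (a + b) ?C j v"
    and d2: "col_deg (a + b) ?C j v \<le> col_deg (a + b) ?C j w"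
    by (auto simp: mono_path3_def)
  have lt: "u < a + b" "v < a + b" "w < a + b" using e1 e2 by (auto simp: col_edge_def)
  show False
  proof (cases "u < a")
    case True
    have e1': "col_edge a c1 j u v" using e1 col_edge_join_left[OF c1 True] \<open>j \<noteq> Suc k\<close> by simp
    then have "v < a" by (simp add: col_edge_def)
    have e2': "col_edge a c1 j v w" using e2 col_edge_join_left[OF c1 \<open>v < a\<close>] \<open>j \<noteq> Suc k\<close> by simp
    then have "w < a" by (simp add: col_edge_def)
    have "mono_path3 a c1 j u v w"
      using e1' e2' \<open>u \<noteq> w\<close> d1 d2 \<open>j \<noteq> Suc k\<close>
      by (simp add: mono_path3_def col_deg_join_left[OF c1 True]
          col_deg_join_left[OF c1 \<open>v < a\<close>] col_deg_join_left[OF c1 \<open>w < a\<close>])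
    then show False using f1 by (simp add: mono_path3_free_def)
  next
    case False
    then have "a \<le> u" by simp
    have "a \<le> v" and e1': "col_edge b c2 j (u - a) (v - a)"
      using e1 col_edge_join_right[OF c2 \<open>a \<le> u\<close> lt(1)] \<open>j \<noteq> Suc k\<close> by auto
    have "a \<le> w" and e2': "col_edge b c2 j (v - a) (w - a)"
      using e2 col_edge_join_right[OF c2 \<open>a \<le> v\<close> lt(2)] \<open>j \<noteq> Suc k\<close> by auto
    have "u - a \<noteq> w - a" using \<open>u \<noteq> w\<close> \<open>a \<le> u\<close> \<open>a \<le> w\<close> by simp
    then have "mono_path3 b c2 j (u - a) (v - a) (w - a)"
      using e1' e2' d1 d2 \<open>j \<noteq> Suc k\<close>
      by (simp add: mono_path3_def col_deg_join_right[OF c2 \<open>a \<le> u\<close> lt(1)]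
          col_deg_join_right[OF c2 \<open>a \<le> v\<close> lt(2)] col_deg_join_right[OF c2 \<open>a \<le> w\<close> lt(3)])
    then show False using f2 by (simp add: mono_path3_free_def)
  qed
qed

lemma p3_free_coloring_join:
  assumes "p3_free_coloring k a c1" "p3_free_coloring k b c2" "a \<noteq> b"
  shows "p3_free_coloring (Suc k) (a + b) (join_coloring k a c1 c2)"
proof -
  have c: "edge_coloring k a c1" "edge_coloring k b c2"
    and f: "\<And>j. mono_path3_free a c1 j" "\<And>j. mono_path3_free b c2 j"
    using assms(1,2) by (auto simp: p3_free_coloring_iff)
  have "mono_path3_free (a + b) (join_coloring k a c1 c2) j" for j
    using mono_path3_free_join_new[OF c assms(3)] mono_path3_free_join_old[OF c f]
    by (cases "j = Suc k") auto
  then show ?thesis using edge_coloring_join[OF c] by (simp add: p3_free_coloring_iff)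
qed

lemma p3_free_coloring_exists_double:
  assumes "\<And>m. m \<le> F \<Longrightarrow> \<exists>c. p3_free_coloring k m c" "m \<le> 2 * F - 1"
  shows "\<exists>c. p3_free_coloring (Suc k) m c"
proof (cases "m \<le> F")
  case True
  then obtain c where "p3_free_coloring k m c" using assms(1) by blast
  then show ?thesis using p3_free_coloring_mono[of k m c "Suc k"] by auto
next
  case False
  then have "m - F \<le> F" "F \<noteq> m - F" using assms(2) by auto
  obtain c1 c2 where "p3_free_coloring k F c1" "p3_free_coloring k (m - F) c2"
    using assms(1)[OF order_refl] assms(1)[OF \<open>m - F \<le> F\<close>] by blast
  then have "p3_free_coloring (Suc k) (F + (m - F)) (join_coloring k F c1 c2)"
    using \<open>F \<noteq> m - F\<close> by (rule p3_free_coloring_join)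
  moreover have "F + (m - F) = m" using False by simp
  ultimately have "p3_free_coloring (Suc k) m (join_coloring k F c1 c2)" by simp
  then show ?thesis by blast
qed

section \<open>Explicit base colourings\<close>

definition mat_deg :: "nat \<Rightarrow> nat list list \<Rightarrow> nat \<Rightarrow> nat \<Rightarrow> nat" where
  "mat_deg n M j v = length (filter (\<lambda>u. u \<noteq> v \<and> M!v!u = j) [0..<n])"

definition mat_p3_free :: "nat \<Rightarrow> nat \<Rightarrow> nat list list \<Rightarrow> bool" where
  "mat_p3_free k n M \<longleftrightarrow>
     (\<forall>u \<in> set [0..<n]. \<forall>v \<in> set [0..<n]. u \<noteq> v \<longrightarrow> M!u!v = M!v!u \<and> 1 \<le> M!u!v \<and> M!u!v \<le> k) \<and>
     (\<forall>u \<in> set [0..<n]. \<forall>v \<in> set [0..<n]. \<forall>w \<in> set [0..<n].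
        u \<noteq> v \<and> v \<noteq> w \<and> u \<noteq> w \<and> M!u!v = M!v!w \<longrightarrow>
        \<not> (mat_deg n M (M!u!v) u \<le> mat_deg n M (M!u!v) v \<and>
           mat_deg n M (M!u!v) v \<le> mat_deg n M (M!u!v) w))"

lemma col_deg_mat: "v < n \<Longrightarrow> col_deg n (\<lambda>u v. M!u!v) j v = mat_deg n M j v"
proof -
  assume "v < n"
  then have "{u. col_edge n (\<lambda>u v. M!u!v) j v u} = set (filter (\<lambda>u. u \<noteq> v \<and> M!v!u = j) [0..<n])"
    by (auto simp: col_edge_def)
  then show ?thesis
    unfolding col_deg_def mat_deg_def by (simp only: distinct_card[OF distinct_filter[OF distinct_upt]])
qed

lemma p3_free_coloring_mat:
  assumes "mat_p3_free k n M"
  shows "p3_free_coloring k n (\<lambda>u v. M!u!v)"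
  unfolding p3_free_coloring_iff
proof (intro conjI allI)
  show "edge_coloring k n (\<lambda>u v. M!u!v)"
    using assms by (auto simp: mat_p3_free_def edge_coloring_def)
  have free: "\<And>u v w. u < n \<Longrightarrow> v < n \<Longrightarrow> w < n \<Longrightarrow> u \<noteq> v \<Longrightarrow> v \<noteq> w \<Longrightarrow> u \<noteq> w \<Longrightarrow>
      M!u!v = M!v!w \<Longrightarrow> \<not> (mat_deg n M (M!u!v) u \<le> mat_deg n M (M!u!v) v \<and>
        mat_deg n M (M!u!v) v \<le> mat_deg n M (M!u!v) w)"
    using assms unfolding mat_p3_free_def by simp
  show "mono_path3_free n (\<lambda>u v. M!u!v) j" for j
    unfolding mono_path3_free_def
  proof (intro allI notI)
    fix u v w assume p: "mono_path3 n (\<lambda>u v. M!u!v) j u v w"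
    then have "u < n" "v < n" "w < n" "u \<noteq> v" "v \<noteq> w" "u \<noteq> w" "M!u!v = j" "M!v!w = j"
      by (auto simp: mono_path3_def col_edge_def)
    then show False
      using free[of u v w] p by (simp add: mono_path3_def col_deg_mat)
  qed
qed

text \<open>Doubling the 2-colourings of K_n, n \<le> 3, reaches only 5 vertices with 3 colours.\<close>

definition K6_coloring :: "nat list list" where
  "K6_coloring = [[0, 1, 1, 1, 2, 3], [1, 0, 2, 2, 3, 2], [1, 2, 0, 3, 2, 1],
                  [1, 2, 3, 0, 2, 1], [2, 3, 2, 2, 0, 1], [3, 2, 1, 1, 1, 0]]"

definition K7_coloring :: "nat list list" where
  "K7_coloring = [[0, 1, 2, 1, 3, 3, 2], [1, 0, 1, 2, 3, 3, 1], [2, 1, 0, 1, 2, 2, 3],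
                  [1, 2, 1, 0, 3, 3, 1], [3, 3, 2, 3, 0, 1, 2], [3, 3, 2, 3, 1, 0, 2],
                  [2, 1, 3, 1, 2, 2, 0]]"

lemma mat_p3_free_K6: "mat_p3_free 3 6 K6_coloring"
  by code_simp

lemma mat_p3_free_K7: "mat_p3_free 3 7 K7_coloring"
  by code_simp

lemma p3_free_coloring_exists_2:
  assumes "m \<le> 3"
  shows "\<exists>c. p3_free_coloring 2 m c"
proof -
  have "\<exists>c. p3_free_coloring (Suc 1) m c"
    using p3_free_coloring_le_2 assms by (intro p3_free_coloring_exists_double[of 2]) auto
  then show ?thesis by (simp add: numeral_2_eq_2)
qed

lemma p3_free_coloring_exists_3: "m \<le> 7 \<Longrightarrow> \<exists>c. p3_free_coloring 3 m c"
proof -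
  assume "m \<le> 7"
  then consider "m \<le> 5" | "m = 6" | "m = 7" by linarith
  then show ?thesis
  proof cases
    case 1
    then have "\<exists>c. p3_free_coloring (Suc 2) m c"
      using p3_free_coloring_exists_2 by (intro p3_free_coloring_exists_double[of 3]) auto
    then show ?thesis by (simp add: numeral_3_eq_3)
  next
    case 2
    then show ?thesis using p3_free_coloring_mat[OF mat_p3_free_K6] by blast
  next
    case 3
    then show ?thesis using p3_free_coloring_mat[OF mat_p3_free_K7] by blast
  qed
qed

lemma p3_free_coloring_exists:
  assumes "3 \<le> k" "m \<le> 3 * 2 ^ (k - 2) + 1"
  shows "\<exists>c. p3_free_coloring k m c"
proof -
  obtain i where k: "k = i + 3" using assms(1) by (metis add.commute le_Suc_ex)
  have "\<forall>m \<le> 3 * 2 ^ (i + 1) + 1. \<exists>c. p3_free_coloring (i + 3) m c"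
  proof (induction i)
    case 0 then show ?case using p3_free_coloring_exists_3 by simp
  next
    case (Suc i)
    then show ?case using p3_free_coloring_exists_double[of "3 * 2 ^ (i + 1) + 1" "i + 3"] by simp
  qed
  then show ?thesis using assms(2) k by simp
qed

section \<open>A colour class without monotone paths of order three\<close>

lemma card_sq_le_sum_if_sum_inverse_le_1:
  fixes x :: "'a \<Rightarrow> real"
  assumes "finite A" "\<And>a. a \<in> A \<Longrightarrow> 0 < x a" "(\<Sum>a\<in>A. 1 / x a) \<le> 1"
  shows "real (card A) ^ 2 \<le> (\<Sum>a\<in>A. x a)"
proof -
  let ?g = "real (card A)"
  have "2 * ?g \<le> x a + ?g^2 / x a" if "a \<in> A" for a
  proof -
    have "0 \<le> (x a - ?g)^2 / x a" using assms(2)[OF that] by simp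
    also have "\<dots> = x a + ?g^2 / x a - 2 * ?g"
      using assms(2)[OF that] by (simp add: power2_eq_square field_simps)
    finally show ?thesis by simp
  qed
  then have "(\<Sum>a\<in>A. 2 * ?g) \<le> (\<Sum>a\<in>A. x a + ?g^2 / x a)" by (rule sum_mono)
  also have "\<dots> = (\<Sum>a\<in>A. x a) + ?g^2 * (\<Sum>a\<in>A. 1 / x a)"
    by (simp add: sum.distrib sum_distrib_left)
  also have "\<dots> \<le> (\<Sum>a\<in>A. x a) + ?g^2"
    using assms(3) by (simp add: mult_left_le)
  finally show ?thesis by (simp add: power2_eq_square)
qed

locale p3_free_class =
  fixes n :: nat and c :: "nat \<Rightarrow> nat \<Rightarrow> nat" and j :: nat
  assumes sym: "\<And>u v. u < n \<Longrightarrow> v < n \<Longrightarrow> u \<noteq> v \<Longrightarrow> c u v = c v u"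
    and free: "mono_path3_free n c j"
begin

abbreviation adj :: "nat \<Rightarrow> nat \<Rightarrow> bool" where "adj \<equiv> col_edge n c j"
abbreviation d :: "nat \<Rightarrow> nat" where "d \<equiv> col_deg n c j"

definition nbrs :: "nat \<Rightarrow> nat set" where "nbrs v = {u. adj v u}"

lemma adj_sym: "adj u v \<Longrightarrow> adj v u"
  using sym unfolding col_edge_def by auto

lemma adj_bounds: "adj u v \<Longrightarrow> u < n \<and> v < n \<and> u \<noteq> v"
  unfolding col_edge_def by auto

lemma finite_nbrs: "finite (nbrs v)"
  by (rule finite_subset[of _ "{..<n}"]) (auto simp: nbrs_def col_edge_def)

lemma d_eq_card_nbrs: "d v = card (nbrs v)"
  unfolding nbrs_def col_deg_def ..

lemma d_pos_if_adj: "adj u v \<Longrightarrow> 0 < d u"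
  using finite_nbrs d_eq_card_nbrs by (metis card_gt_0_iff empty_iff mem_Collect_eq nbrs_def)

lemma not_mono_path3: "\<not> mono_path3 n c j u v w"
  using free unfolding mono_path3_free_def by blast

lemma deg_1_if_adj_same_deg:
  assumes "adj u v" "d u = d v"
  shows "d u = 1"
proof (rule ccontr)
  assume "d u \<noteq> 1"
  with d_pos_if_adj[OF assms(1)] have "\<not> nbrs u \<subseteq> {v}"
    using d_eq_card_nbrs card_mono[of "{v}" "nbrs u"] by force
  then obtain w where "adj u w" "w \<noteq> v" by (auto simp: nbrs_def)
  then show False
    using not_mono_path3[of w u v] not_mono_path3[of v u w] adj_sym assms
    by (cases "d w \<le> d u") (auto simp: mono_path3_def)
qed

lemma deg_lt_nbrs_if_adj_lt:
  assumes "adj u v" "d u < d v" "adj u w"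
  shows "d u < d w"
  using not_mono_path3[of w u v] adj_sym[OF assms(3)] assms
  by (cases "w = v") (auto simp: mono_path3_def)

lemma adj_unique_if_deg_le_1:
  assumes "d u \<le> 1" "adj u v" "adj u w"
  shows "v = w"
proof -
  have "card (nbrs u) \<le> Suc 0" "v \<in> nbrs u" "w \<in> nbrs u"
    using assms d_eq_card_nbrs by (auto simp: nbrs_def)
  then show ?thesis using finite_nbrs card_le_Suc0_iff_eq by blast
qed

text \<open>Ties in the second disjunct occur only on isolated edges, where the index decides which
  endpoint is high; thus every edge joins a high vertex to a non-high one.\<close>

definition high :: "nat set" where
  "high = {v. \<exists>u. adj v u \<and> (d u < d v \<or> d u = d v \<and> u < v)}"

lemma high_subset: "high \<subseteq> {..<n}"
  unfolding high_def using adj_bounds by auto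

lemma finite_high: "finite high"
  using high_subset finite_subset by blast

lemma d_pos_if_high: "h \<in> high \<Longrightarrow> 0 < d h"
  unfolding high_def using d_pos_if_adj by blast

lemma high_iff_if_adj_same_deg:
  assumes "adj u v" "d u = d v"
  shows "u \<in> high \<longleftrightarrow> v < u"
proof -
  have "adj u x \<Longrightarrow> x = v" for x
    using adj_unique_if_deg_le_1[of u x v] deg_1_if_adj_same_deg[OF assms] assms(1) by simp
  then have "u \<in> high \<longleftrightarrow> d v < d u \<or> d v = d u \<and> v < u"
    unfolding high_def using assms(1) by blast
  then show ?thesis using assms(2) by simp
qed

lemma high_if_adj_lt:
  assumes "adj u v" "d u < d v"
  shows "v \<in> high \<and> u \<notin> high"
proof
  show "v \<in> high" using assms adj_sym unfolding high_def by blast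
  show "u \<notin> high"
  proof
    assume "u \<in> high"
    then obtain x where "adj u x" "d x < d u \<or> d x = d u \<and> x < u" unfolding high_def by blast
    then show False using deg_lt_nbrs_if_adj_lt[OF assms] by force
  qed
qed

lemma adj_high_iff:
  assumes "adj u v"
  shows "u \<in> high \<longleftrightarrow> v \<notin> high"
proof -
  consider "d u = d v" | "d u < d v" | "d v < d u" by linarith
  then show ?thesis
  proof cases
    case 1
    then show ?thesis using high_iff_if_adj_same_deg[OF assms 1] adj_bounds[OF assms]
        high_iff_if_adj_same_deg[OF adj_sym[OF assms] 1[symmetric]] by auto
  next
    case 2
    then show ?thesis using high_if_adj_lt[OF assms] by blast
  next
    case 3
    then show ?thesis using high_if_adj_lt[OF adj_sym[OF assms]] by blast
  qed
qed

lemma high_deg_gt: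
  assumes "h \<in> high" "adj h l"
  shows "d l < d h \<or> d l = 1 \<and> d h = 1"
proof -
  have "\<not> d h < d l" using high_if_adj_lt[OF assms(2)] assms(1) by blast
  then show ?thesis using deg_1_if_adj_same_deg[OF assms(2)] by (cases "d h = d l") auto
qed

definition low :: "nat set" where "low = {v. v < n \<and> v \<notin> high \<and> 0 < d v}"

definition isolated :: "nat set" where "isolated = {v. v < n \<and> d v = 0}"

lemma finite_low: "finite low"
  unfolding low_def by simp

lemma lessThan_eq_high_low_isolated:
  "{..<n} = high \<union> low \<union> isolated" "high \<inter> low = {}" "(high \<union> low) \<inter> isolated = {}"
  using high_subset by (auto simp: low_def isolated_def dest: d_pos_if_high)

lemma finite_isolated: "finite isolated"
  unfolding isolated_def by simp

lemma card_high_low_isolated: "card high + card low + card isolated = n"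
proof -
  have "card high + card low + card isolated = card (high \<union> low \<union> isolated)"
    using lessThan_eq_high_low_isolated(2,3) finite_high finite_low finite_isolated
    by (simp add: card_Un_disjoint)
  then show ?thesis by (simp flip: lessThan_eq_high_low_isolated(1))
qed

lemma nbrs_high_subset_low: "h \<in> high \<Longrightarrow> nbrs h \<subseteq> low"
proof
  fix l assume "h \<in> high" "l \<in> nbrs h"
  then have "adj l h" using adj_sym by (simp add: nbrs_def)
  then show "l \<in> low"
    using \<open>h \<in> high\<close> adj_high_iff adj_bounds d_pos_if_adj by (auto simp: low_def)
qed

lemma nbrs_subset_high_if_not_high: "v \<notin> high \<Longrightarrow> nbrs v \<subseteq> high"
  using adj_high_iff by (auto simp: nbrs_def)

lemma sum_inv_deg_nbrs_high: "(\<Sum>h\<in>high. \<Sum>l\<in>nbrs h. 1 / real (d l)) = card low"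
proof -
  have "(\<Sum>h\<in>high. \<Sum>l\<in>nbrs h. 1 / real (d l)) = (\<Sum>h\<in>high. \<Sum>l\<in>{l\<in>low. adj h l}. 1 / real (d l))"
    using nbrs_high_subset_low by (intro sum.cong refl arg_cong2[where f=sum]) (auto simp: nbrs_def)
  also have "\<dots> = (\<Sum>l\<in>low. \<Sum>h\<in>{h\<in>high. adj h l}. 1 / real (d l))"
    using finite_high finite_low by (rule sum.swap_restrict)
  also have "\<dots> = (\<Sum>l\<in>low. 1)"
  proof (rule sum.cong[OF refl])
    fix l assume l: "l \<in> low"
    then have "{h\<in>high. adj h l} = nbrs l"
      using nbrs_subset_high_if_not_high adj_sym by (auto simp: low_def nbrs_def)
    then show "(\<Sum>h\<in>{h\<in>high. adj h l}. 1 / real (d l)) = 1"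
      using l d_eq_card_nbrs by (simp add: low_def)
  qed
  finally show ?thesis by simp
qed

lemma sum_inv_deg_high: "(\<Sum>h\<in>high. \<Sum>l\<in>nbrs h. 1 / real (d h)) = card high"
proof -
  have "(\<Sum>l\<in>nbrs h. 1 / real (d h)) = 1" if "h \<in> high" for h
    using d_pos_if_high[OF that] by (simp flip: d_eq_card_nbrs)
  then have "(\<Sum>h\<in>high. \<Sum>l\<in>nbrs h. 1 / real (d h)) = (\<Sum>h\<in>high. 1)" by (rule sum.cong[OF refl])
  then show ?thesis by simp
qed

lemma card_low_minus_card_high:
  "real (card low) - real (card high) = (\<Sum>h\<in>high. \<Sum>l\<in>nbrs h. 1 / real (d l) - 1 / real (d h))"
  by (simp only: sum_subtractf sum_inv_deg_nbrs_high sum_inv_deg_high)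

lemma inv_deg_le_inv_deg_nbr:
  assumes "h \<in> high" "l \<in> nbrs h"
  shows "1 / real (d h) \<le> 1 / real (d l)"
proof -
  have "adj h l" using assms(2) by (simp add: nbrs_def)
  then have "0 < d l" "d l \<le> d h"
    using high_deg_gt[OF assms(1)] d_pos_if_adj[OF adj_sym] by force+
  then show ?thesis by (simp add: frac_le)
qed

lemma card_high_le_card_low: "card high \<le> card low"
proof -
  have "0 \<le> (\<Sum>h\<in>high. \<Sum>l\<in>nbrs h. 1 / real (d l) - 1 / real (d h))"
    using inv_deg_le_inv_deg_nbr by (intro sum_nonneg) auto
  then show ?thesis using card_low_minus_card_high by simp
qed

definition high1 :: "nat set" where "high1 = {h\<in>high. d h = 1}"

definition high2 :: "nat set" where "high2 = {h\<in>high. 2 \<le> d h}"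

lemma high_eq_high1_high2: "high = high1 \<union> high2" "high1 \<inter> high2 = {}"
  by (auto simp: high1_def high2_def dest: d_pos_if_high)

lemma inv_deg_high2_le:
  assumes "h \<in> high2"
  shows "1 / (real (d h) - 1) \<le> (\<Sum>l\<in>nbrs h. 1 / real (d l) - 1 / real (d h))"
proof -
  have h: "h \<in> high" "2 \<le> d h" using assms by (auto simp: high2_def)
  have "1 / (real (d h) - 1) = (\<Sum>l\<in>nbrs h. 1 / (real (d h) - 1) - 1 / real (d h))"
    using h(2) by (simp add: field_simps flip: d_eq_card_nbrs)
  also have "\<dots> \<le> (\<Sum>l\<in>nbrs h. 1 / real (d l) - 1 / real (d h))"
  proof (rule sum_mono)
    fix l assume "l \<in> nbrs h"
    then have "adj h l" by (simp add: nbrs_def)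
    then have "1 \<le> d l" "real (d l) \<le> real (d h) - 1"
      using high_deg_gt[OF h(1) \<open>adj h l\<close>] d_pos_if_adj[OF adj_sym[OF \<open>adj h l\<close>]] h(2)
      by linarith+
    then show "1 / (real (d h) - 1) - 1 / real (d h) \<le> 1 / real (d l) - 1 / real (d h)"
      by (simp add: frac_le)
  qed
  finally show ?thesis .
qed

lemma sum_inv_deg_high2_le:
  "(\<Sum>h\<in>high2. 1 / (real (d h) - 1)) \<le> real (card low) - real (card high)"
proof -
  have "(\<Sum>h\<in>high2. 1 / (real (d h) - 1)) \<le> (\<Sum>h\<in>high2. \<Sum>l\<in>nbrs h. 1 / real (d l) - 1 / real (d h))"
    using inv_deg_high2_le by (rule sum_mono)
  also have "\<dots> \<le> (\<Sum>h\<in>high. \<Sum>l\<in>nbrs h. 1 / real (d l) - 1 / real (d h))"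
    using inv_deg_le_inv_deg_nbr high_eq_high1_high2(1)
    by (intro sum_mono2[OF finite_high] sum_nonneg) auto
  finally show ?thesis using card_low_minus_card_high by simp
qed

lemma sum_deg_low: "(\<Sum>l\<in>low. d l) = (\<Sum>h\<in>high. d h)"
proof -
  have "(\<Sum>l\<in>low. d l) = (\<Sum>l\<in>low. card {h\<in>high. adj l h})"
  proof (rule sum.cong[OF refl])
    fix l assume "l \<in> low"
    then have "nbrs l = {h\<in>high. adj l h}"
      using nbrs_subset_high_if_not_high[of l] by (auto simp: low_def nbrs_def)
    then show "d l = card {h\<in>high. adj l h}" by (simp add: d_eq_card_nbrs)
  qed
  also have "\<dots> = (\<Sum>h\<in>high. card {l\<in>low. adj l h})"
    using sum.swap_restrict[OF finite_low finite_high, of "\<lambda>_ _. 1::nat"] by simp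
  also have "\<dots> = (\<Sum>h\<in>high. d h)"
  proof (rule sum.cong[OF refl])
    fix h assume "h \<in> high"
    then have "nbrs h = {l\<in>low. adj l h}"
      using nbrs_high_subset_low[of h] adj_sym by (auto simp: nbrs_def)
    then show "card {l\<in>low. adj l h} = d h" by (simp add: d_eq_card_nbrs)
  qed
  finally show ?thesis .
qed

lemma sum_deg: "(\<Sum>v<n. d v) = 2 * (\<Sum>h\<in>high. d h)"
proof -
  have "(\<Sum>v<n. d v) = (\<Sum>h\<in>high. d h) + (\<Sum>l\<in>low. d l) + (\<Sum>v\<in>isolated. d v)"
    using lessThan_eq_high_low_isolated finite_high finite_low finite_isolated
    by (simp add: sum.union_disjoint)
  then show ?thesis using sum_deg_low by (simp add: isolated_def)
qed

lemma finite_high1: "finite high1" and finite_high2: "finite high2"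
  using finite_high by (auto simp: high1_def high2_def)

lemma sum_deg_high: "(\<Sum>h\<in>high. d h) = card high1 + (\<Sum>h\<in>high2. d h)"
proof -
  have "(\<Sum>h\<in>high. d h) = (\<Sum>h\<in>high1. d h) + (\<Sum>h\<in>high2. d h)"
    using high_eq_high1_high2 finite_high1 finite_high2 by (simp add: sum.union_disjoint)
  then show ?thesis by (simp add: high1_def)
qed

lemma card_high: "card high = card high1 + card high2"
  using high_eq_high1_high2 finite_high1 finite_high2 by (simp add: card_Un_disjoint)

lemma card_high_plus_sq_le_sum_deg:
  assumes "card low \<le> card high + 1"
  shows "card high + (card high2)^2 \<le> (\<Sum>h\<in>high. d h)"
proof -
  have "(\<Sum>h\<in>high2. 1 / (real (d h) - 1)) \<le> 1" using sum_inv_deg_high2_le assms by linarith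
  then have "real (card high2) ^ 2 \<le> (\<Sum>h\<in>high2. real (d h) - 1)"
    using finite_high by (intro card_sq_le_sum_if_sum_inverse_le_1) (auto simp: high2_def)
  also have "\<dots> = real (\<Sum>h\<in>high2. d h) - real (card high2)"
    by (simp add: sum_subtractf)
  finally have "real ((card high2)^2 + card high2) \<le> real (\<Sum>h\<in>high2. d h)" by simp
  then have "(card high2)^2 + card high2 \<le> (\<Sum>h\<in>high2. d h)"
    by (simp only: of_nat_le_iff)
  then show ?thesis using sum_deg_high card_high by simp
qed

lemma high2_empty_if_card_low_eq:
  assumes "card low = card high"
  shows "high2 = {}"
proof (rule ccontr)
  assume "high2 \<noteq> {}"
  with finite_high2 have "0 < (\<Sum>h\<in>high2. 1 / (real (d h) - 1))"
    by (intro sum_pos) (auto simp: high2_def)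
  then show False using sum_inv_deg_high2_le assms by simp
qed

text \<open>Equivalently, the component of \<open>x\<close> has at most two vertices.\<close>

definition tiny :: "nat \<Rightarrow> bool" where
  "tiny x \<longleftrightarrow> d x \<le> 1 \<and> (\<forall>u. adj x u \<longrightarrow> d u \<le> 1)"

lemma card_high1_le_card_tiny_low: "card high1 \<le> card {l\<in>low. tiny l}"
proof -
  define f where "f h = (SOME l. adj h l)" for h
  have f: "adj h (f h) \<and> d (f h) = 1" if "h \<in> high1" for h
  proof -
    have h: "h \<in> high" "d h = 1" using that by (auto simp: high1_def)
    then have "nbrs h \<noteq> {}" using d_eq_card_nbrs by auto
    then obtain l where "adj h l" by (auto simp: nbrs_def)
    then have hf: "adj h (f h)" unfolding f_def by (rule someI)
    then have "d (f h) = 1"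
      using high_deg_gt[OF h(1) hf] d_pos_if_adj[OF adj_sym[OF hf]] h(2) by linarith
    with hf show ?thesis ..
  qed
  have "inj_on f high1"
  proof (rule inj_onI)
    fix h h' assume "h \<in> high1" "h' \<in> high1" "f h = f h'"
    then have "d (f h) = 1" "adj (f h) h" "adj (f h) h'"
      using f adj_sym by metis+
    then show "h = h'" by (intro adj_unique_if_deg_le_1[of "f h"]) simp_all
  qed
  moreover have "f ` high1 \<subseteq> {l\<in>low. tiny l}"
  proof (rule image_subsetI)
    fix h assume h: "h \<in> high1"
    then have "f h \<in> low" using f nbrs_high_subset_low by (auto simp: high1_def nbrs_def)
    moreover have "d u \<le> 1" if "adj (f h) u" for u
    proof -
      have "u = h" using that f[OF h] adj_sym[of h "f h"] adj_unique_if_deg_le_1[of "f h" u h] by simp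
      then show ?thesis using h by (simp add: high1_def)
    qed
    then have "tiny (f h)" using f[OF h] by (simp add: tiny_def)
    ultimately show "f h \<in> {l\<in>low. tiny l}" by blast
  qed
  ultimately show ?thesis using finite_low by (intro card_inj_on_le) auto
qed

lemma not_tiny_subset: "{x. x < n \<and> \<not> tiny x} \<subseteq> high2 \<union> (low - {l\<in>low. tiny l})"
proof
  fix x assume x: "x \<in> {x. x < n \<and> \<not> tiny x}"
  show "x \<in> high2 \<union> (low - {l\<in>low. tiny l})"
  proof (cases "x \<in> high")
    case True
    have "d u \<le> 1" if "adj x u" "d x \<le> 1" for u
      using high_deg_gt[OF True that(1)] that(2) by linarith
    then have "\<not> d x \<le> 1" using x by (auto simp: tiny_def)
    then show ?thesis using True by (simp add: high2_def)
  next
    case False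
    have "d x \<noteq> 0"
    proof
      assume "d x = 0"
      then have "tiny x" by (auto simp: tiny_def dest: d_pos_if_adj)
      then show False using x by simp
    qed
    then show ?thesis using False x by (auto simp: low_def)
  qed
qed

lemma card_not_tiny_le:
  assumes "card low \<le> card high + 1"
  shows "card {x. x < n \<and> \<not> tiny x} \<le> 2 * card high2 + 1"
proof -
  have "card {x. x < n \<and> \<not> tiny x} \<le> card (high2 \<union> (low - {l\<in>low. tiny l}))"
    using not_tiny_subset finite_high finite_low by (intro card_mono) (auto simp: high2_def)
  also have "\<dots> \<le> card high2 + card (low - {l\<in>low. tiny l})" by (rule card_Un_le)
  also have "card (low - {l\<in>low. tiny l}) = card low - card {l\<in>low. tiny l}"
    using finite_low by (intro card_Diff_subset) auto
  finally show ?thesis using assms card_high card_high1_le_card_tiny_low by linarith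
qed

end

section \<open>Signatures\<close>

lemma sum_card_Pow:
  assumes "finite A"
  shows "2 * (\<Sum>S\<in>Pow A. card S) = card A * 2 ^ card A"
  using assms
proof (induction A rule: finite_induct)
  case empty then show ?case by simp
next
  case (insert a A)
  have inj: "inj_on (insert a) (Pow A)"
  proof (rule inj_onI)
    fix x y assume "x \<in> Pow A" "y \<in> Pow A" "insert a x = insert a y"
    moreover have "a \<notin> x" "a \<notin> y" using calculation(1,2) insert.hyps by auto
    ultimately show "x = y" by (metis Diff_insert_absorb)
  qed
  have "(\<Sum>S\<in>insert a ` Pow A. card S) = (\<Sum>S\<in>Pow A. card (insert a S))"
    using inj by (rule sum.reindex_cong) simp_all
  also have "\<dots> = (\<Sum>S\<in>Pow A. card S + 1)"
  proof (rule sum.cong[OF refl])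
    fix S assume "S \<in> Pow A"
    then have "a \<notin> S" "finite S" using insert.hyps finite_subset by auto
    then show "card (insert a S) = card S + 1" by simp
  qed
  also have "\<dots> = (\<Sum>S\<in>Pow A. card S) + 2 ^ card A"
    unfolding sum.distrib using insert.hyps by (simp add: card_Pow)
  finally have "(\<Sum>S\<in>insert a ` Pow A. card S) = (\<Sum>S\<in>Pow A. card S) + 2 ^ card A" .
  moreover have "Pow A \<inter> insert a ` Pow A = {}" using insert.hyps by auto
  ultimately have "(\<Sum>S\<in>Pow (insert a A). card S) = 2 * (\<Sum>S\<in>Pow A. card S) + 2 ^ card A"
    using insert.hyps by (simp add: Pow_insert sum.union_disjoint)
  then show ?case using insert by (simp add: algebra_simps)
qed

lemma eq_bound_if_card_mult_le_sum:
  fixes f :: "'a \<Rightarrow> nat"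
  assumes "finite A" "\<And>a. a \<in> A \<Longrightarrow> f a \<le> b" "card A * b \<le> (\<Sum>a\<in>A. f a)" "a \<in> A"
  shows "f a = b"
proof (rule ccontr)
  assume "f a \<noteq> b"
  then have "(\<Sum>a\<in>A. f a) < (\<Sum>a\<in>A. b)"
    using assms by (intro sum_strict_mono_ex1) (auto simp: order.strict_iff_order)
  then show False using assms(3) by simp
qed

context p3_free_coloring
begin

lemma p3_free_class: "j \<in> {1..k} \<Longrightarrow> p3_free_class n c j"
  using coloring class_free unfolding p3_free_class_def edge_coloring_def by blast

abbreviation high :: "nat \<Rightarrow> nat set" where "high j \<equiv> p3_free_class.high n c j"

definition signature :: "nat \<Rightarrow> nat set" where "signature x = {j\<in>{1..k}. x \<in> high j}"

lemma signature_image_subset: "signature ` {..<n} \<subseteq> Pow {1..k}"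
  by (auto simp: signature_def)

lemma color_in_signature_iff:
  assumes "u < n" "v < n" "u \<noteq> v"
  shows "c u v \<in> {1..k} \<and> (c u v \<in> signature u \<longleftrightarrow> c u v \<notin> signature v)"
proof -
  have j: "c u v \<in> {1..k}" using coloring assms unfolding edge_coloring_def by blast
  moreover have "col_edge n c (c u v) u v" using assms by (simp add: col_edge_def)
  ultimately show ?thesis
    using p3_free_class.adj_high_iff[OF p3_free_class] by (auto simp: signature_def)
qed

lemma inj_on_signature: "inj_on signature {..<n}"
  using color_in_signature_iff by (intro inj_onI) auto

lemma card_signature_image: "card (signature ` {..<n}) = n"
  using inj_on_signature by (simp add: card_image)

lemma n_le_2_pow: "n \<le> 2 ^ k"
  using card_mono[OF _ signature_image_subset] card_signature_image by (simp add: card_Pow)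

lemma sum_card_high: "(\<Sum>j\<in>{1..k}. card (high j)) = (\<Sum>S\<in>signature ` {..<n}. card S)"
proof -
  have "(\<Sum>j\<in>{1..k}. card (high j)) = (\<Sum>j\<in>{1..k}. card {x\<in>{..<n}. x \<in> high j})"
  proof (rule sum.cong[OF refl])
    fix j assume "j \<in> {1..k}"
    then have "{x\<in>{..<n}. x \<in> high j} = high j"
      using p3_free_class.high_subset[OF p3_free_class] by blast
    then show "card (high j) = card {x\<in>{..<n}. x \<in> high j}" by simp
  qed
  also have "\<dots> = (\<Sum>x\<in>{..<n}. card (signature x))"
    using sum.swap_restrict[of "{1..k}" "{..<n}" "\<lambda>_ _. 1::nat"] by (simp add: signature_def)
  also have "\<dots> = (\<Sum>S\<in>signature ` {..<n}. card S)"
    by (simp add: sum.reindex[OF inj_on_signature])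
  finally show ?thesis .
qed

lemma sum_col_deg:
  assumes "x < n"
  shows "(\<Sum>j\<in>{1..k}. col_deg n c j x) = n - 1"
proof -
  have "(\<Sum>j\<in>{1..k}. col_deg n c j x) = (\<Sum>j\<in>{1..k}. card {u\<in>{..<n} - {x}. c x u = j})"
  proof (rule sum.cong[OF refl])
    fix j
    have "{u. col_edge n c j x u} = {u\<in>{..<n} - {x}. c x u = j}"
      using assms by (auto simp: col_edge_def)
    then show "col_deg n c j x = card {u\<in>{..<n} - {x}. c x u = j}" by (simp add: col_deg_def)
  qed
  also have "\<dots> = (\<Sum>u\<in>{..<n} - {x}. card {j\<in>{1..k}. c x u = j})"
    using sum.swap_restrict[of "{1..k}" "{..<n} - {x}" "\<lambda>_ _. 1::nat"] by simp
  also have "\<dots> = (\<Sum>u\<in>{..<n} - {x}. 1)"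
  proof (rule sum.cong[OF refl])
    fix u assume "u \<in> {..<n} - {x}"
    then have "c x u \<in> {1..k}" using coloring assms unfolding edge_coloring_def by auto
    then have "{j\<in>{1..k}. c x u = j} = {c x u}" by auto
    then show "card {j\<in>{1..k}. c x u = j} = 1" by simp
  qed
  finally show ?thesis using assms by simp
qed

lemma sum_sum_deg_high: "2 * (\<Sum>j\<in>{1..k}. \<Sum>h\<in>high j. col_deg n c j h) = n * (n - 1)"
proof -
  have "2 * (\<Sum>j\<in>{1..k}. \<Sum>h\<in>high j. col_deg n c j h) =
      (\<Sum>j\<in>{1..k}. 2 * (\<Sum>h\<in>high j. col_deg n c j h))"
    by (rule sum_distrib_left)
  also have "\<dots> = (\<Sum>j\<in>{1..k}. \<Sum>x<n. col_deg n c j x)"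
    by (rule sum.cong[OF refl]) (simp add: p3_free_class.sum_deg[OF p3_free_class])
  also have "\<dots> = (\<Sum>x<n. \<Sum>j\<in>{1..k}. col_deg n c j x)" by (rule sum.swap)
  also have "\<dots> = (\<Sum>x<n. n - 1)" by (rule sum.cong[OF refl]) (rule sum_col_deg, simp)
  finally show ?thesis by simp
qed

lemma twice_card_high_le:
  assumes "j \<in> {1..k}"
  shows "2 * card (high j) \<le> n"
proof -
  interpret C: p3_free_class n c j using p3_free_class[OF assms] .
  show ?thesis using C.card_high_low_isolated C.card_high_le_card_low by linarith
qed

lemma sum_deg_high_eq_card_high_if:
  assumes "j \<in> {1..k}" "2 * card (high j) = n"
  shows "(\<Sum>h\<in>high j. col_deg n c j h) = card (high j)"
proof -
  interpret C: p3_free_class n c j using p3_free_class[OF assms(1)] .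
  have "card C.low = card (high j)"
    using C.card_high_low_isolated C.card_high_le_card_low assms(2) by linarith
  then have "C.high2 = {}" by (rule C.high2_empty_if_card_low_eq)
  then show ?thesis using C.sum_deg_high C.card_high by simp
qed

lemma n_ne_2_pow:
  assumes "2 \<le> k"
  shows "n \<noteq> 2 ^ k"
proof
  assume n: "n = 2 ^ k"
  have "signature ` {..<n} = Pow {1..k}"
    using card_subset_eq[OF _ signature_image_subset] card_signature_image n by (simp add: card_Pow)
  then have sum_high: "2 * (\<Sum>j\<in>{1..k}. card (high j)) = k * n"
    using sum_card_high sum_card_Pow[of "{1..k}"] n by simp
  then have "card {1..k} * n \<le> (\<Sum>j\<in>{1..k}. 2 * card (high j))"
    by (simp add: sum_distrib_left)
  then have "2 * card (high j) = n" if "j \<in> {1..k}" for j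
    using eq_bound_if_card_mult_le_sum[of "{1..k}" "\<lambda>j. 2 * card (high j)"] twice_card_high_le that
    by blast
  then have "(\<Sum>j\<in>{1..k}. \<Sum>h\<in>high j. col_deg n c j h) = (\<Sum>j\<in>{1..k}. card (high j))"
    by (intro sum.cong refl sum_deg_high_eq_card_high_if)
  then have "n * (n - 1) = 2 * (\<Sum>j\<in>{1..k}. card (high j))" using sum_sum_deg_high by simp
  then have "n * (n - 1) = k * n" using sum_high by simp
  then have "n - 1 = k" using n by simp
  moreover have "k + 2 \<le> 2 ^ k" using assms by (induction k rule: dec_induct) auto
  ultimately show False using n by linarith
qed

end

section \<open>Colourings with 2^k - 1 vertices\<close>

lemma mult_Suc_add_2_le_2_pow: "k * (k + 1) + 2 \<le> 2 ^ (k + 1)"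
proof (induction k)
  case 0 then show ?case by simp
next
  case (Suc k)
  have "Suc k \<le> 2 ^ k" by (induction k) auto
  then show ?case using Suc.IH by simp
qed

lemma counts_inconsistent_large:
  fixes k n C G :: nat
  assumes k6: "6 \<le> k" and kC: "k + C \<le> n" and GG: "2 * (G * G) \<le> k * ((n - 1) * (n - k))"
    and bs: "k * n \<le> 2 * G + k + n + C"
  shows False
proof -
  define t where "t = (k - 2) * n"
  have "k * n = t + 2 * n" using k6 by (simp add: t_def diff_mult_distrib)
  then have "t \<le> 2 * G" using kC bs by linarith
  then have "(k - 2) * n \<le> 2 * G" unfolding t_def .
  then have "((k - 2) * n) * ((k - 2) * n) \<le> (2 * G) * (2 * G)" using mult_le_mono by blast
  also have "\<dots> = 2 * (2 * (G * G))" by simp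
  also have "\<dots> \<le> 2 * k * ((n - 1) * (n - k))"
    using mult_le_mono2[OF GG, of 2] by (simp only: mult.assoc)
  also have "\<dots> < 2 * k * (n * n)"
  proof -
    have "(n - 1) * (n - k) \<le> (n - 1) * n" by simp
    also have "\<dots> < n * n" using kC k6 by simp
    finally show ?thesis using k6 by simp
  qed
  also have "\<dots> \<le> (k - 2) * (k - 2) * (n * n)"
  proof -
    obtain m where "k = m + 6" using k6 by (metis add.commute le_Suc_ex)
    then have "2 * k \<le> (k - 2) * (k - 2)" by (simp add: algebra_simps)
    then show ?thesis by simp
  qed
  finally show False by (simp add: mult_ac)
qed

lemma counts_inconsistent:
  fixes k n C G Q :: nat
  assumes k4: "4 \<le> k" and n: "n = 2 ^ k - 1" and C: "2 * C = k * (k - 1)"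
    and cs: "G * G \<le> k * Q" and ed: "2 * Q + k * (n - 1) \<le> n * (n - 1)"
    and bs: "k * n \<le> 2 * G + k + n + C"
  shows False
proof -
  have "k < 2 ^ k" by (rule less_exp)
  then have "k \<le> n" using n by linarith
  then have "n * (n - 1) = (n - 1) * (k + (n - k))" by (simp add: mult.commute)
  also have "\<dots> = k * (n - 1) + (n - 1) * (n - k)" by (simp add: add_mult_distrib2 mult.commute)
  finally have "n * (n - 1) = k * (n - 1) + (n - 1) * (n - k)" .
  then have "2 * Q \<le> (n - 1) * (n - k)" using ed by linarith
  have "2 * (G * G) \<le> k * (2 * Q)" using cs by simp
  also have "\<dots> \<le> k * ((n - 1) * (n - k))" using \<open>2 * Q \<le> (n - 1) * (n - k)\<close> by simp
  finally have GG: "2 * (G * G) \<le> k * ((n - 1) * (n - k))" .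
  consider "k = 4" | "k = 5" | "6 \<le> k" using k4 by linarith
  then show False
  proof cases
    case 1
    then have "18 \<le> G" using n C bs by simp
    then have "324 \<le> G * G" using mult_le_mono[of 18 G 18 G] by simp
    then show False using GG 1 n by simp
  next
    case 2
    then have "55 \<le> G" using n C bs by simp
    then have "3025 \<le> G * G" using mult_le_mono[of 55 G 55 G] by simp
    then show False using GG 2 n by simp
  next
    case 3
    have "k * (k + 1) = k * (k - 1) + 2 * k" using 3 by (cases k) auto
    then have "k * (k - 1) + 2 * k + 2 \<le> 2 * 2 ^ k" using mult_Suc_add_2_le_2_pow[of k] by simp
    then have "k + C \<le> n" using n C by linarith
    then show False using counts_inconsistent_large[OF 3 _ GG bs] by blast
  qed
qed

lemma sq_sum_le_card_mult_sum_sq: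
  fixes f :: "'a \<Rightarrow> nat"
  shows "(\<Sum>x\<in>A. f x) ^ 2 \<le> card A * (\<Sum>x\<in>A. f x ^ 2)"
proof -
  have "(\<Sum>x\<in>A. real (f x))\<^sup>2 \<le> (\<Sum>x\<in>A. (real (f x))\<^sup>2) * card A"
    by (rule sum_squared_le_sum_of_squares)
  then have "real ((\<Sum>x\<in>A. f x) ^ 2) \<le> real (card A * (\<Sum>x\<in>A. f x ^ 2))"
    by (simp add: mult.commute)
  then show ?thesis by (simp only: of_nat_le_iff)
qed

lemma two_elements_if_card_ge_2:
  assumes "2 \<le> card A"
  obtains a b where "a \<in> A" "b \<in> A" "a \<noteq> b"
proof -
  obtain a B where "A = insert a B" "a \<notin> B" "1 \<le> card B"
    using assms card_le_Suc_iff[of 1 A] by (auto simp: numeral_2_eq_2)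
  moreover from this obtain b where "b \<in> B" by fastforce
  ultimately show ?thesis using that by blast
qed

lemma sym_diff_cancel_left: "sym_diff A B = sym_diff A C \<Longrightarrow> B = C"
  by blast

context p3_free_coloring
begin

abbreviation low :: "nat \<Rightarrow> nat set" where "low j \<equiv> p3_free_class.low n c j"
abbreviation high2 :: "nat \<Rightarrow> nat set" where "high2 j \<equiv> p3_free_class.high2 n c j"
abbreviation tiny :: "nat \<Rightarrow> nat \<Rightarrow> bool" where "tiny j \<equiv> p3_free_class.tiny n c j"

lemma signature_subset: "signature x \<subseteq> {1..k}"
  by (auto simp: signature_def)

lemma neq_if_signature_sym_diff:
  assumes "signature y = sym_diff (signature x) B" "B \<noteq> {}"
  shows "x \<noteq> y"
proof
  assume "x = y"
  then have "sym_diff (signature x) B = signature x" using assms(1) by simp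
  then show False using assms(2) by blast
qed

lemma col_edge_if_signature_sym_diff_singleton:
  assumes x: "x < n" and z: "z < n" and sz: "signature z = sym_diff (signature x) {i}"
  shows "col_edge n c i x z"
proof -
  have "x \<noteq> z" using neq_if_signature_sym_diff[OF sz] by blast
  moreover have "c x z \<in> signature x \<longleftrightarrow> c x z \<notin> signature z"
    using color_in_signature_iff x z calculation by blast
  then have "c x z = i" using sz by blast
  ultimately show ?thesis using x z by (simp add: col_edge_def)
qed

lemma signature_surj_onto:
  assumes img: "signature ` {..<n} = Pow {1..k} - {m}" and "T \<subseteq> {1..k}" "T \<noteq> m"
  obtains z where "z < n" "signature z = T"
proof -
  have "T \<in> signature ` {..<n}" using img assms(2,3) by blast
  then show ?thesis using that by blast
qed

lemma not_tiny_if_signature_sym_diff_pair: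
  assumes img: "signature ` {..<n} = Pow {1..k} - {m}"
    and x: "x < n" and y: "y < n" and i: "i \<in> {1..k}" and l: "l \<in> {1..k}" and "i \<noteq> l"
    and sy: "signature y = sym_diff (signature x) {i, l}" and "c x y = i"
  shows "\<not> tiny i x"
proof
  assume "tiny i x"
  interpret C: p3_free_class n c i using p3_free_class[OF i] .
  have "x \<noteq> y" using neq_if_signature_sym_diff[OF sy] by blast
  then have xy: "C.adj x y" using x y \<open>c x y = i\<close> by (simp add: col_edge_def)
  have dx: "C.d x \<le> 1" and dy: "C.d y \<le> 1"
    using \<open>tiny i x\<close> xy by (auto simp: C.tiny_def)
  show False
  proof (cases "sym_diff (signature x) {i} = m")
    case False
    moreover have "sym_diff (signature x) {i} \<subseteq> {1..k}" using signature_subset i by blast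
    ultimately obtain z where z: "z < n" "signature z = sym_diff (signature x) {i}"
      using signature_surj_onto[OF img] by metis
    have "z \<noteq> y"
    proof
      assume "z = y"
      then have "{i} = {i, l}" using z(2) sy sym_diff_cancel_left by metis
      then show False using \<open>i \<noteq> l\<close> by blast
    qed
    then show False
      using C.adj_unique_if_deg_le_1[OF dx xy col_edge_if_signature_sym_diff_singleton[OF x z]] by simp
  next
    case True
    have "sym_diff (signature x) {l} \<noteq> m"
    proof
      assume "sym_diff (signature x) {l} = m"
      then have "{l} = {i}" using True sym_diff_cancel_left by metis
      then show False using \<open>i \<noteq> l\<close> by blast
    qed
    moreover have "sym_diff (signature x) {l} \<subseteq> {1..k}" using signature_subset l by blast
    ultimately obtain w where w: "w < n" "signature w = sym_diff (signature x) {l}"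
      using signature_surj_onto[OF img] by metis
    have "signature y = sym_diff (signature w) {i}" using sy w(2) \<open>i \<noteq> l\<close> by blast
    then have "C.adj y w" using C.adj_sym col_edge_if_signature_sym_diff_singleton[OF w(1) y] by blast
    moreover have "w \<noteq> x" using neq_if_signature_sym_diff[OF w(2)] by blast
    ultimately show False using C.adj_unique_if_deg_le_1[OF dy C.adj_sym[OF xy]] by blast
  qed
qed

lemma sym_diff_signature_eq_if_tiny_pair:
  assumes img: "signature ` {..<n} = Pow {1..k} - {m}"
    and x: "x < n" and i: "i \<in> {1..k}" and l: "l \<in> {1..k}" and "i \<noteq> l"
    and "tiny i x" "tiny l x"
  shows "sym_diff (signature x) {i, l} = m"
proof (rule ccontr)
  assume "sym_diff (signature x) {i, l} \<noteq> m"
  moreover have "sym_diff (signature x) {i, l} \<subseteq> {1..k}" using signature_subset i l by blast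
  ultimately obtain y where y: "y < n" "signature y = sym_diff (signature x) {i, l}"
    using signature_surj_onto[OF img] by metis
  have "x \<noteq> y" using neq_if_signature_sym_diff[OF y(2)] by blast
  then have "c x y \<in> signature x \<longleftrightarrow> c x y \<notin> signature y"
    using color_in_signature_iff x y(1) by blast
  then have "c x y = i \<or> c x y = l" using y(2) by blast
  then show False
  proof
    assume "c x y = i"
    then show False
      using not_tiny_if_signature_sym_diff_pair[OF img x y(1) i l \<open>i \<noteq> l\<close> y(2)] \<open>tiny i x\<close> by blast
  next
    assume "c x y = l"
    moreover have "signature y = sym_diff (signature x) {l, i}" using y(2) by (simp add: insert_commute)
    ultimately show False
      using not_tiny_if_signature_sym_diff_pair[OF img x y(1) l i] \<open>i \<noteq> l\<close> \<open>tiny l x\<close> by blast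
  qed
qed

definition tiny_colors :: "nat \<Rightarrow> nat set" where "tiny_colors x = {j\<in>{1..k}. tiny j x}"

lemma tiny_colors_eq_pair:
  assumes img: "signature ` {..<n} = Pow {1..k} - {m}"
    and x: "x < n" and "i \<in> tiny_colors x" "l \<in> tiny_colors x" "i \<noteq> l"
  shows "tiny_colors x = {i, l}" "signature x = sym_diff m {i, l}"
proof -
  have i: "i \<in> {1..k}" "tiny i x" and l: "l \<in> {1..k}" "tiny l x"
    using assms(3,4) by (auto simp: tiny_colors_def)
  have m: "sym_diff (signature x) {i, l} = m"
    using sym_diff_signature_eq_if_tiny_pair[OF img x i(1) l(1) \<open>i \<noteq> l\<close> i(2) l(2)] .
  then show "signature x = sym_diff m {i, l}" by blast
  have "p \<in> {i, l}" if p: "p \<in> tiny_colors x" for p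
  proof (rule ccontr)
    assume "p \<notin> {i, l}"
    then have "sym_diff (signature x) {i, p} = m"
      using sym_diff_signature_eq_if_tiny_pair[OF img x i(1) _ _ i(2)] p by (auto simp: tiny_colors_def)
    then have "{i, p} = {i, l}" using m sym_diff_cancel_left by metis
    then show False using \<open>p \<notin> {i, l}\<close> by blast
  qed
  then show "tiny_colors x = {i, l}" using assms(3,4) by blast
qed

lemma tiny_colors_pair:
  assumes img: "signature ` {..<n} = Pow {1..k} - {m}"
    and x: "x < n" and "2 \<le> card (tiny_colors x)"
  obtains P where "P \<subseteq> {1..k}" "card P = 2" "tiny_colors x = P" "signature x = sym_diff m P"
proof -
  obtain i l where il: "i \<in> tiny_colors x" "l \<in> tiny_colors x" "i \<noteq> l"
    using assms(3) by (rule two_elements_if_card_ge_2)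
  then have "{i, l} \<subseteq> {1..k}" "card {i, l} = 2" by (auto simp: tiny_colors_def)
  with tiny_colors_eq_pair[OF img x il] show ?thesis by (intro that) simp_all
qed

lemma card_two_tiny_colors_le:
  assumes img: "signature ` {..<n} = Pow {1..k} - {m}"
  shows "card {x. x < n \<and> 2 \<le> card (tiny_colors x)} \<le> k choose 2"
proof -
  let ?X = "{x. x < n \<and> 2 \<le> card (tiny_colors x)}"
  let ?P = "{P. P \<subseteq> {1..k} \<and> card P = 2}"
  have fin: "finite ?P" by (rule finite_subset[of _ "Pow {1..k}"]) auto
  have "signature ` ?X \<subseteq> sym_diff m ` ?P"
  proof
    fix S assume "S \<in> signature ` ?X"
    then obtain x where x: "x < n" "2 \<le> card (tiny_colors x)" "S = signature x" by blast
    obtain P where "P \<subseteq> {1..k}" "card P = 2" "signature x = sym_diff m P"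
      using tiny_colors_pair[OF img x(1,2)] by metis
    then show "S \<in> sym_diff m ` ?P" using x(3) by blast
  qed
  then have "card (signature ` ?X) \<le> card (sym_diff m ` ?P)"
    by (rule card_mono[OF finite_imageI[OF fin]])
  also have "\<dots> \<le> card ?P" by (rule card_image_le[OF fin])
  also have "\<dots> = k choose 2" using n_subsets[of "{1..k}" 2] by simp
  finally have "card (signature ` ?X) \<le> k choose 2" .
  moreover have "inj_on signature ?X"
    using inj_on_signature by (rule inj_on_subset) auto
  ultimately show ?thesis by (simp add: card_image)
qed

lemma sum_card_tiny_colors_le:
  assumes img: "signature ` {..<n} = Pow {1..k} - {m}"
  shows "(\<Sum>x<n. card (tiny_colors x)) \<le> n + (k choose 2)"
proof -
  define X2 where "X2 = {x. x < n \<and> 2 \<le> card (tiny_colors x)}"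
  have "(\<Sum>x<n. card (tiny_colors x)) \<le> (\<Sum>x<n. 1 + (if x \<in> X2 then 1 else 0))"
  proof (rule sum_mono)
    fix x assume "x \<in> {..<n}"
    show "card (tiny_colors x) \<le> 1 + (if x \<in> X2 then 1 else 0)"
    proof (cases "x \<in> X2")
      case True
      then have "x < n" "2 \<le> card (tiny_colors x)" by (simp_all add: X2_def)
      then obtain P where "card P = 2" "tiny_colors x = P" using tiny_colors_pair[OF img] by metis
      then show ?thesis using True by simp
    next
      case False
      then show ?thesis using \<open>x \<in> {..<n}\<close> by (simp add: X2_def)
    qed
  qed
  also have "\<dots> = n + card X2"
  proof -
    have "X2 \<subseteq> {..<n}" by (auto simp: X2_def)
    then show ?thesis unfolding sum.distrib by (simp add: sum.If_cases Int_absorb1)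
  qed
  finally show ?thesis using card_two_tiny_colors_le[OF img] by (simp add: X2_def)
qed

lemma signature_image_eq_Pow_minus:
  assumes "n = 2 ^ k - 1"
  obtains m where "m \<subseteq> {1..k}" "signature ` {..<n} = Pow {1..k} - {m}"
proof -
  have "card (Pow {1..k} - signature ` {..<n}) = card (Pow {1..k}) - card (signature ` {..<n})"
    by (rule card_Diff_subset[OF finite_imageI[OF finite_lessThan] signature_image_subset])
  also have "\<dots> = 2 ^ k - (2 ^ k - 1)" using card_signature_image assms by (simp add: card_Pow)
  also have "\<dots> = 1" using one_le_power[of "2::nat" k] by linarith
  finally have "card (Pow {1..k} - signature ` {..<n}) = 1" .
  then obtain m where m: "Pow {1..k} - signature ` {..<n} = {m}" by (rule card_1_singletonE)
  then have "m \<subseteq> {1..k}" by blast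
  moreover have "signature ` {..<n} = Pow {1..k} - {m}"
    using m signature_image_subset by (auto simp: set_eq_iff)
  ultimately show ?thesis by (rule that)
qed

lemma twice_card_high_eq:
  assumes "1 \<le> k" and n: "n = 2 ^ k - 1"
    and m: "m \<subseteq> {1..k}" and img: "signature ` {..<n} = Pow {1..k} - {m}"
    and j: "j \<in> {1..k}"
  shows "2 * card (high j) + 1 = n"
proof -
  have "(\<Sum>j\<in>{1..k}. card (high j)) = (\<Sum>S\<in>Pow {1..k}. card S) - card m"
    using sum_card_high img sum_diff1_nat[of card "Pow {1..k}" m] m by simp
  moreover have "2 * (\<Sum>S\<in>Pow {1..k}. card S) = k * 2 ^ k" using sum_card_Pow[of "{1..k}"] by simp
  moreover have "card m \<le> k" using card_mono[OF _ m] by simp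
  moreover have "card m \<le> (\<Sum>S\<in>Pow {1..k}. card S)"
    using member_le_sum[of m "Pow {1..k}" card] m by simp
  moreover have "k * n = k * 2 ^ k - k" using n by (simp add: diff_mult_distrib2)
  ultimately have "k * n \<le> 2 * (\<Sum>j\<in>{1..k}. card (high j)) + k" by linarith
  moreover have "(\<Sum>j\<in>{1..k}. 2 * card (high j) + 1) = 2 * (\<Sum>j\<in>{1..k}. card (high j)) + k"
    by (simp only: sum.distrib sum_distrib_left) simp
  ultimately have le: "card {1..k} * n \<le> (\<Sum>j\<in>{1..k}. 2 * card (high j) + 1)" by simp
  have "odd n" using n assms(1) by simp
  have "2 * card (high j) + 1 \<le> n" if "j \<in> {1..k}" for j
  proof -
    have "2 * card (high j) \<noteq> n" using \<open>odd n\<close> by (metis dvd_triv_left)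
    then show ?thesis using twice_card_high_le[OF that] by simp
  qed
  then show ?thesis using eq_bound_if_card_mult_le_sum[OF _ _ le j] by simp
qed

lemma card_low_le_if_twice_card_high_eq:
  assumes "j \<in> {1..k}" "2 * card (high j) + 1 = n"
  shows "card (low j) \<le> card (high j) + 1"
  using p3_free_class.card_high_low_isolated[OF p3_free_class[OF assms(1)]] assms(2) by linarith

lemma sum_sq_card_high2_le:
  assumes eq: "\<And>j. j \<in> {1..k} \<Longrightarrow> 2 * card (high j) + 1 = n"
  shows "2 * (\<Sum>j\<in>{1..k}. card (high2 j) ^ 2) + k * (n - 1) \<le> n * (n - 1)"
proof -
  have "(\<Sum>j\<in>{1..k}. card (high j) + card (high2 j) ^ 2) \<le> (\<Sum>j\<in>{1..k}. \<Sum>h\<in>high j. col_deg n c j h)"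
  proof (rule sum_mono)
    fix j assume j: "j \<in> {1..k}"
    show "card (high j) + card (high2 j) ^ 2 \<le> (\<Sum>h\<in>high j. col_deg n c j h)"
      using p3_free_class.card_high_plus_sq_le_sum_deg[OF p3_free_class[OF j]]
        card_low_le_if_twice_card_high_eq[OF j eq[OF j]] .
  qed
  then have "2 * (\<Sum>j\<in>{1..k}. card (high j)) + 2 * (\<Sum>j\<in>{1..k}. card (high2 j) ^ 2) \<le> n * (n - 1)"
    using sum_sum_deg_high by (simp add: sum.distrib)
  moreover have "2 * (\<Sum>j\<in>{1..k}. card (high j)) = (\<Sum>j\<in>{1..k}. n - 1)"
    unfolding sum_distrib_left
  proof (rule sum.cong[OF refl])
    fix j assume "j \<in> {1..k}"
    then show "2 * card (high j) = n - 1" using eq by fastforce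
  qed
  ultimately show ?thesis by simp
qed

lemma k_mult_n_le_sum_card_high2:
  assumes img: "signature ` {..<n} = Pow {1..k} - {m}"
    and eq: "\<And>j. j \<in> {1..k} \<Longrightarrow> 2 * card (high j) + 1 = n"
  shows "k * n \<le> 2 * (\<Sum>j\<in>{1..k}. card (high2 j)) + k + n + (k choose 2)"
proof -
  have "card {x. x < n \<and> \<not> tiny j x} + card {x. x < n \<and> tiny j x} = n" for j
  proof -
    have "{x. x < n \<and> \<not> tiny j x} \<union> {x. x < n \<and> tiny j x} = {..<n}" by auto
    then show ?thesis by (subst card_Un_disjoint[symmetric]) auto
  qed
  then have part: "(\<Sum>j\<in>{1..k}. card {x. x < n \<and> \<not> tiny j x}) +
      (\<Sum>j\<in>{1..k}. card {x. x < n \<and> tiny j x}) = k * n"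
    by (simp flip: sum.distrib)
  have "(\<Sum>j\<in>{1..k}. card {x. x < n \<and> tiny j x}) = (\<Sum>x<n. card (tiny_colors x))"
    using sum.swap_restrict[of "{1..k}" "{..<n}" "\<lambda>_ _. 1::nat" "\<lambda>j x. tiny j x"]
    by (simp add: tiny_colors_def)
  moreover have "(\<Sum>j\<in>{1..k}. card {x. x < n \<and> \<not> tiny j x}) \<le> (\<Sum>j\<in>{1..k}. 2 * card (high2 j) + 1)"
  proof (rule sum_mono)
    fix j assume j: "j \<in> {1..k}"
    show "card {x. x < n \<and> \<not> tiny j x} \<le> 2 * card (high2 j) + 1"
      using p3_free_class.card_not_tiny_le[OF p3_free_class[OF j]]
        card_low_le_if_twice_card_high_eq[OF j eq[OF j]] .
  qed
  moreover have "(\<Sum>j\<in>{1..k}. 2 * card (high2 j) + 1) = 2 * (\<Sum>j\<in>{1..k}. card (high2 j)) + k"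
    by (simp only: sum.distrib sum_distrib_left) simp
  ultimately show ?thesis using part sum_card_tiny_colors_le[OF img] by linarith
qed

lemma n_ne_2_pow_minus_1:
  assumes "4 \<le> k"
  shows "n \<noteq> 2 ^ k - 1"
proof
  assume n: "n = 2 ^ k - 1"
  obtain m where m: "m \<subseteq> {1..k}" "signature ` {..<n} = Pow {1..k} - {m}"
    using signature_image_eq_Pow_minus[OF n] .
  have eq: "2 * card (high j) + 1 = n" if "j \<in> {1..k}" for j
    using twice_card_high_eq[OF _ n m that] assms by simp
  define G where "G = (\<Sum>j\<in>{1..k}. card (high2 j))"
  define Q where "Q = (\<Sum>j\<in>{1..k}. card (high2 j) ^ 2)"
  have "G * G \<le> k * Q"
    using sq_sum_le_card_mult_sum_sq[of "\<lambda>j. card (high2 j)" "{1..k}"]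
    by (simp add: G_def Q_def power2_eq_square)
  moreover have "2 * Q + k * (n - 1) \<le> n * (n - 1)"
    unfolding Q_def using eq by (rule sum_sq_card_high2_le)
  moreover have "k * n \<le> 2 * G + k + n + (k choose 2)"
    unfolding G_def using k_mult_n_le_sum_card_high2[OF m(2) eq] .
  moreover have "2 * (k choose 2) = k * (k - 1)"
  proof -
    have "even (k * (k - 1))" by (cases "even k") auto
    then show ?thesis by (simp add: choose_two)
  qed
  ultimately show False by (intro counts_inconsistent[OF assms n])
qed

end

lemma (in p3_free_coloring) n_less_2_pow: "2 \<le> k \<Longrightarrow> n < 2 ^ k"
  using n_le_2_pow n_ne_2_pow by (simp add: le_neq_implies_less)

lemma (in p3_free_coloring) n_less_2_pow_minus_1: "4 \<le> k \<Longrightarrow> n < 2 ^ k - 1"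
  using n_less_2_pow n_ne_2_pow_minus_1 by fastforce

lemma M_k_3_bounds:
  assumes "p3_free_coloring k F c" "0 < F" "\<And>n c. p3_free_coloring k n c \<Longrightarrow> n < U"
  shows "F < M_k k 3 \<and> M_k k 3 \<le> U"
proof
  have "mk_good k 3 U"
    unfolding mk_good_def
  proof (intro allI impI)
    fix n c' assume "U \<le> n" "edge_coloring k n c'"
    have "F < U" using assms(1,3) by blast
    then have "0 < n" using \<open>U \<le> n\<close> by linarith
    have "\<not> p3_free_coloring k n c'" using assms(3)[of n c'] \<open>U \<le> n\<close> by auto
    then obtain j where "j \<in> {1..k}" "\<not> mono_path3_free n c' j"
      using \<open>edge_coloring k n c'\<close> p3_free_coloring.intro by blast
    then show "\<exists>j\<in>{1..k}. 3 \<le> mp n c' j" using mp_ge_3_iff[OF \<open>0 < n\<close>] by blast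
  qed
  then show "M_k k 3 \<le> U" unfolding M_k_def by (rule Least_le)
  have "\<not> mk_good k 3 M" if M: "M \<le> F" for M
  proof
    assume "mk_good k 3 M"
    then obtain j where "j \<in> {1..k}" "3 \<le> mp F c j"
      using M p3_free_coloring.coloring[OF assms(1)] unfolding mk_good_def by blast
    then show False
      using mp_ge_3_iff[OF assms(2)] p3_free_coloring.class_free[OF assms(1)] by blast
  qed
  moreover have "mk_good k 3 (M_k k 3)" unfolding M_k_def using \<open>mk_good k 3 U\<close> by (rule LeastI)
  ultimately show "F < M_k k 3" by (meson not_less)
qed

lemma M_k_2_3: "M_k 2 3 = 4"
proof -
  obtain c where c: "p3_free_coloring 2 3 c" using p3_free_coloring_exists_2 by blast
  have bound: "n < 2 ^ 2" if "p3_free_coloring 2 n c'" for n c'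
    using p3_free_coloring.n_less_2_pow[OF that] by simp
  have "3 < M_k 2 3 \<and> M_k 2 3 \<le> 2 ^ 2" using M_k_3_bounds[OF c _ bound] by simp
  then show ?thesis by simp
qed

lemma M_k_3_3: "M_k 3 3 = 8"
proof -
  obtain c where c: "p3_free_coloring 3 7 c" using p3_free_coloring_exists_3 by blast
  have bound: "n < 2 ^ 3" if "p3_free_coloring 3 n c'" for n c'
    using p3_free_coloring.n_less_2_pow[OF that] by simp
  have "7 < M_k 3 3 \<and> M_k 3 3 \<le> 2 ^ 3" using M_k_3_bounds[OF c _ bound] by simp
  then show ?thesis by simp
qed

lemma M_k_3_bounds_ge_4:
  assumes "4 \<le> k"
  shows "3 * 2 ^ (k - 2) + 1 < M_k k 3 \<and> M_k k 3 \<le> 2 ^ k - 1"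
proof -
  obtain c where "p3_free_coloring k (3 * 2 ^ (k - 2) + 1) c"
    using p3_free_coloring_exists[of k] assms by auto
  moreover have "n < 2 ^ k - 1" if "p3_free_coloring k n c'" for n c'
    using p3_free_coloring.n_less_2_pow_minus_1[OF that assms] .
  ultimately show ?thesis by (intro M_k_3_bounds) simp_all
qed

theorem theorem1p3:
  shows "M_k 2 3 = 4 \<and> M_k 3 3 = 8 \<and>
    (\<forall>k::nat. k \<ge> 4 \<longrightarrow>
       (3/4) * 2 ^ k + 2 \<le> real (M_k k 3) \<and> real (M_k k 3) \<le> 2 ^ k - 1)"
proof (intro conjI allI impI M_k_2_3 M_k_3_3)
  fix k :: nat assume "4 \<le> k"
  note b = M_k_3_bounds_ge_4[OF this]
  have "k = k - 2 + 2" using \<open>4 \<le> k\<close> by simp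
  then have pow: "(2::real) ^ k = 2 ^ (k - 2) * 2 ^ 2" by (metis power_add)
  have "3 * 2 ^ (k - 2) + 2 \<le> M_k k 3" using b by linarith
  then have "real (3 * 2 ^ (k - 2) + 2) \<le> real (M_k k 3)" by (simp only: of_nat_le_iff)
  then show "(3/4) * 2 ^ k + 2 \<le> real (M_k k 3)" using pow by simp
  have "real (2 ^ k - 1 :: nat) = 2 ^ k - 1" by (simp add: of_nat_diff)
  then show "real (M_k k 3) \<le> 2 ^ k - 1" using b by (metis of_nat_le_iff)
qed

end
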